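(* Let $A$ and $B$ be finite skew braces with $|A|=|B|$. If $A$ and $B$ are isoclinic, then $\Lambda(A)\cong\Lambda(B)$ and $\Theta(A)\cong\Theta(B)$ as graphs.
   Context: A skew brace is a triple $(A,+,\circ)$ where $(A,+)$ and $(A,\circ)$ are groups with $a\circ(b+c)=a\circ b-a+a\circ c$. $\lambda_a(b)=-a+a\circ b$, $a*b=\lambda_a(b)-b$, $[a,b]_+=a+b-a-b$; $\theta_{(a,b)}(c)=a+\lambda_b(c)-a$ is an action of $(A,+)\rtimes_\lambda(A,\circ)$ on $(A,+)$. $\operatorname{Soc}(A)=\ker\lambda\cap Z(A,+)$ and $\operatorname{Ann}(A)=\operatorname{Soc}(A)\cap Z(A,\circ)$ (an ideal). $A^2$ is the additive subgroup generated by all $a*b$, and $A'$ is the additive subgroup generated by $A^2$ and all $[a,b]_+$. Two skew braces $A,B$ are isoclinic if there exist a skew brace isomorphism $\xi\colon A/\operatorname{Ann}(A)\to B/\operatorname{Ann}(B)$ and a group isomorphism $\delta\colon (A',+)\to(B',+)$ such that for all $a,b\in A$ and all $a_1,b_1\in B$ with $\overline{a_1}=\xi(\overline a)$, $\overline{b_1}=\xi(\overline b)$ one has $\delta([a,b]_+)=[a_1,b_1]_+$ and $\delta(a*b)=a_1*b_1$. For a finite skew brace, $\Lambda(A)$ (resp. $\Theta(A)$) is the graph whose vertices are the $\lambda$-orbits (resp. $\theta$-orbits) of size $>1$, two distinct vertices $L_1,L_2$ adjacent iff $\gcd(|L_1|,|L_2|)\neq1$. *)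

theory Defs
  imports "HOL-Algebra.Algebra"
begin

text \<open>A skew brace on a carrier: P is the additive group (A,+) (written multiplicatively
in HOL-Algebra, possibly non-abelian), C the circle group (A,o), same carrier.\<close>

definition skew_brace :: "'a monoid \<Rightarrow> 'a monoid \<Rightarrow> bool" where
  "skew_brace P C \<longleftrightarrow> group P \<and> group C \<and> carrier P = carrier C \<and>
     (\<forall>a\<in>carrier P. \<forall>b\<in>carrier P. \<forall>c\<in>carrier P.
        a \<otimes>\<^bsub>C\<^esub> (b \<otimes>\<^bsub>P\<^esub> c) =
        (a \<otimes>\<^bsub>C\<^esub> b) \<otimes>\<^bsub>P\<^esub> inv\<^bsub>P\<^esub> a \<otimes>\<^bsub>P\<^esub> (a \<otimes>\<^bsub>C\<^esub> c))"

definition lam :: "'a monoid \<Rightarrow> 'a monoid \<Rightarrow> 'a \<Rightarrow> 'a \<Rightarrow> 'a" where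
  "lam P C a b = inv\<^bsub>P\<^esub> a \<otimes>\<^bsub>P\<^esub> (a \<otimes>\<^bsub>C\<^esub> b)"

definition bstar :: "'a monoid \<Rightarrow> 'a monoid \<Rightarrow> 'a \<Rightarrow> 'a \<Rightarrow> 'a" where
  "bstar P C a b = lam P C a b \<otimes>\<^bsub>P\<^esub> inv\<^bsub>P\<^esub> b"

definition acomm :: "'a monoid \<Rightarrow> 'a \<Rightarrow> 'a \<Rightarrow> 'a" where
  "acomm P a b = a \<otimes>\<^bsub>P\<^esub> b \<otimes>\<^bsub>P\<^esub> inv\<^bsub>P\<^esub> a \<otimes>\<^bsub>P\<^esub> inv\<^bsub>P\<^esub> b"

definition theta :: "'a monoid \<Rightarrow> 'a monoid \<Rightarrow> 'a \<Rightarrow> 'a \<Rightarrow> 'a \<Rightarrow> 'a" where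
  "theta P C a b c = a \<otimes>\<^bsub>P\<^esub> lam P C b c \<otimes>\<^bsub>P\<^esub> inv\<^bsub>P\<^esub> a"

definition Soc :: "'a monoid \<Rightarrow> 'a monoid \<Rightarrow> 'a set" where
  "Soc P C = {a \<in> carrier P. (\<forall>b\<in>carrier P. lam P C a b = b) \<and>
                               (\<forall>b\<in>carrier P. a \<otimes>\<^bsub>P\<^esub> b = b \<otimes>\<^bsub>P\<^esub> a)}"

definition Ann :: "'a monoid \<Rightarrow> 'a monoid \<Rightarrow> 'a set" where
  "Ann P C = {a \<in> Soc P C. \<forall>b\<in>carrier P. a \<otimes>\<^bsub>C\<^esub> b = b \<otimes>\<^bsub>C\<^esub> a}"

definition derived :: "'a monoid \<Rightarrow> 'a monoid \<Rightarrow> 'a set" where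
  "derived P C = generate P ({bstar P C a b | a b. a \<in> carrier P \<and> b \<in> carrier P} \<union>
                             {acomm P a b | a b. a \<in> carrier P \<and> b \<in> carrier P})"

text \<open>Quotient skew brace A/Ann(A): carrier = additive cosets of Ann(A) (which coincide
with circle cosets since Ann(A) is an ideal), operations = induced set products.\<close>
definition quot_iso :: "'a monoid \<Rightarrow> 'a monoid \<Rightarrow> 'b monoid \<Rightarrow> 'b monoid
                        \<Rightarrow> ('a set \<Rightarrow> 'b set) \<Rightarrow> bool" where
  "quot_iso P C Q D xi \<longleftrightarrow>
     bij_betw xi (RCOSETS P (Ann P C)) (RCOSETS Q (Ann Q D)) \<and>
     (\<forall>U\<in>RCOSETS P (Ann P C). \<forall>V\<in>RCOSETS P (Ann P C).
        xi (set_mult P U V) = set_mult Q (xi U) (xi V) \<and>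
        xi (set_mult C U V) = set_mult D (xi U) (xi V))"

definition isoclinic :: "'a monoid \<Rightarrow> 'a monoid \<Rightarrow> 'b monoid \<Rightarrow> 'b monoid \<Rightarrow> bool" where
  "isoclinic P C Q D \<longleftrightarrow>
     (\<exists>xi delta. quot_iso P C Q D xi \<and>
        delta \<in> iso (P\<lparr>carrier := derived P C\<rparr>) (Q\<lparr>carrier := derived Q D\<rparr>) \<and>
        (\<forall>a\<in>carrier P. \<forall>b\<in>carrier P. \<forall>a1\<in>carrier Q. \<forall>b1\<in>carrier Q.
           xi (r_coset P (Ann P C) a) = r_coset Q (Ann Q D) a1 \<longrightarrow>
           xi (r_coset P (Ann P C) b) = r_coset Q (Ann Q D) b1 \<longrightarrow>
           delta (acomm P a b) = acomm Q a1 b1 \<and>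
           delta (bstar P C a b) = bstar Q D a1 b1))"

text \<open>lambda-orbits (action of (A,o) on A by lambda) and theta-orbits
(action of (A,+) \<rtimes> (A,o) on A by theta).\<close>
definition lambda_orbits :: "'a monoid \<Rightarrow> 'a monoid \<Rightarrow> 'a set set" where
  "lambda_orbits P C = {{lam P C a x | a. a \<in> carrier P} | x. x \<in> carrier P}"

definition theta_orbits :: "'a monoid \<Rightarrow> 'a monoid \<Rightarrow> 'a set set" where
  "theta_orbits P C =
     {{theta P C a b x | a b. a \<in> carrier P \<and> b \<in> carrier P} | x. x \<in> carrier P}"

definition big_orbits :: "'a set set \<Rightarrow> 'a set set" where
  "big_orbits Os = {L \<in> Os. card L > 1}"

definition orbit_adj :: "'a set \<Rightarrow> 'a set \<Rightarrow> bool" where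
  "orbit_adj L1 L2 \<longleftrightarrow> L1 \<noteq> L2 \<and> gcd (card L1) (card L2) \<noteq> 1"

definition graph_iso :: "'v set \<Rightarrow> ('v \<Rightarrow> 'v \<Rightarrow> bool) \<Rightarrow> 'w set \<Rightarrow> ('w \<Rightarrow> 'w \<Rightarrow> bool) \<Rightarrow> bool" where
  "graph_iso V E W F \<longleftrightarrow>
     (\<exists>f. bij_betw f V W \<and> (\<forall>u\<in>V. \<forall>v\<in>V. E u v \<longleftrightarrow> F (f u) (f v)))"

definition Lambda_graph_iso :: "'a monoid \<Rightarrow> 'a monoid \<Rightarrow> 'b monoid \<Rightarrow> 'b monoid \<Rightarrow> bool" where
  "Lambda_graph_iso P C Q D \<longleftrightarrow>
     graph_iso (big_orbits (lambda_orbits P C)) orbit_adj (big_orbits (lambda_orbits Q D)) orbit_adj"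

definition Theta_graph_iso :: "'a monoid \<Rightarrow> 'a monoid \<Rightarrow> 'b monoid \<Rightarrow> 'b monoid \<Rightarrow> bool" where
  "Theta_graph_iso P C Q D \<longleftrightarrow>
     graph_iso (big_orbits (theta_orbits P C)) orbit_adj (big_orbits (theta_orbits Q D)) orbit_adj"

end

(*
  The lambda-orbit of x is the translate by x of {a * x | a}, and the theta-orbit of x is the
  translate by x of {[a, lambda_b(x)]_+ + b * x | a, b}; both sets lie in A'. If (xi, delta) is an
  isoclinism and xi maps the class of x modulo Ann(A) to the class of x1 modulo Ann(B), then
  lambda_b(x) = -b + b o x has class determined by those of b and x, so delta maps these two sets
  for x bijectively onto the corresponding sets for x1. Hence orbit sizes are constant on the
  cosets of the annihilators and agree along xi. As |A| = |B| and xi is a bijection of the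
  quotients, |Ann(A)| = |Ann(B)|, so for every n both braces have equally many elements, and
  therefore equally many orbits, of size n. The orbit graphs only depend on these numbers.
*)

theory Submission
  imports Defs "HOL-Library.Disjoint_Sets"
begin

lemma (in group) inv_mult_cancel_left:
  "\<lbrakk>x \<in> carrier G; y \<in> carrier G\<rbrakk> \<Longrightarrow> inv x \<otimes> (x \<otimes> y) = y"
  by (simp add: m_assoc[symmetric])

lemma (in group) inv_commute:
  assumes "x \<otimes> y = y \<otimes> x" "x \<in> carrier G" "y \<in> carrier G"
  shows "inv x \<otimes> y = y \<otimes> inv x"
  using inv_solve_left'[of "y \<otimes> inv x" x y] assms
  by (simp add: m_assoc[symmetric], simp add: m_assoc inv_mult_cancel_left)

lemma (in monoid) mult_commute:
  assumes "x \<otimes> z = z \<otimes> x" "y \<otimes> z = z \<otimes> y"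
    and "x \<in> carrier G" "y \<in> carrier G" "z \<in> carrier G"
  shows "x \<otimes> y \<otimes> z = z \<otimes> (x \<otimes> y)"
proof -
  have "x \<otimes> y \<otimes> z = x \<otimes> (z \<otimes> y)"
    using assms by (simp add: m_assoc)
  also have "\<dots> = z \<otimes> (x \<otimes> y)"
    using assms by (simp add: m_assoc[symmetric])
  finally show ?thesis .
qed

lemma (in group) normal_of_central:
  assumes "subgroup H G" and "\<And>h x. h \<in> H \<Longrightarrow> x \<in> carrier G \<Longrightarrow> h \<otimes> x = x \<otimes> h"
  shows "H \<lhd> G"
proof (rule normalI[OF assms(1)], intro ballI)
  fix x assume "x \<in> carrier G"
  thus "H #> x = x <# H"
    unfolding r_coset_def l_coset_def using assms(2) by (intro SUP_cong) auto
qed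

lemma (in normal) rcos_cancel_left:
  assumes "H #> (a \<otimes> u) = H #> (a \<otimes> v)" "a \<in> carrier G" "u \<in> carrier G" "v \<in> carrier G"
  shows "H #> u = H #> v"
proof -
  have cancel: "(H #> inv a) <#> (H #> (a \<otimes> w)) = H #> w" if "w \<in> carrier G" for w
    using that assms(2) by (simp add: rcos_sum m_assoc[symmetric])
  show ?thesis
    using cancel[OF assms(3)] cancel[OF assms(4)] assms(1) by simp
qed

lemma (in group) card_rcoset:
  "\<lbrakk>S \<subseteq> carrier G; x \<in> carrier G\<rbrakk> \<Longrightarrow> card (S #> x) = card S"
  using card_rcosets_equal[OF rcosetsI] by metis

lemma (in group) rcosets_eq_rcoset_of_mem:
  assumes "subgroup H G" "U \<in> rcosets H" "x \<in> U"
  shows "x \<in> carrier G \<and> U = H #> x"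
proof -
  obtain a where a: "a \<in> carrier G" "U = H #> a"
    using assms(2) unfolding RCOSETS_def by blast
  have "x \<in> carrier G"
    using assms(1,3) a r_coset_subset_G subgroup.subset by blast
  thus ?thesis
    using repr_independence[OF _ a(1) assms(1)] assms(3) a(2) by blast
qed

section \<open>Orbit partitions and their graphs\<close>

definition orbit_map :: "'a set \<Rightarrow> ('a \<Rightarrow> 'a set) \<Rightarrow> bool" where
  "orbit_map S Orb \<longleftrightarrow> (\<forall>x\<in>S. x \<in> Orb x \<and> Orb x \<subseteq> S \<and> (\<forall>y\<in>Orb x. Orb y = Orb x))"

lemma orbit_mapI:
  assumes refl: "\<And>x. x \<in> S \<Longrightarrow> x \<in> Orb x" and closed: "\<And>x. x \<in> S \<Longrightarrow> Orb x \<subseteq> S"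
    and trans: "\<And>x y z. \<lbrakk>x \<in> S; y \<in> Orb x; z \<in> Orb y\<rbrakk> \<Longrightarrow> z \<in> Orb x"
    and sym: "\<And>x y. \<lbrakk>x \<in> S; y \<in> Orb x\<rbrakk> \<Longrightarrow> x \<in> Orb y"
  shows "orbit_map S Orb"
proof -
  have "Orb y = Orb x" if "x \<in> S" "y \<in> Orb x" for x y
  proof
    show "Orb y \<subseteq> Orb x"
      using trans that by blast
    have "y \<in> S"
      using closed that by blast
    thus "Orb x \<subseteq> Orb y"
      using trans[OF \<open>y \<in> S\<close> sym[OF that]] by blast
  qed
  thus ?thesis
    unfolding orbit_map_def using refl closed by blast
qed

lemma card_orbits_of_size:
  assumes "finite S" "orbit_map S Orb"
  shows "n * card {L \<in> {Orb x | x. x \<in> S}. card L = n} = card {x \<in> S. card (Orb x) = n}"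
proof -
  let ?F = "{L \<in> {Orb x | x. x \<in> S}. card L = n}"
  have Orb: "x \<in> Orb x" "Orb x \<subseteq> S" "\<And>y. y \<in> Orb x \<Longrightarrow> Orb y = Orb x" if "x \<in> S" for x
    using assms(2) that unfolding orbit_map_def by blast+
  have Union: "\<Union>?F = {x \<in> S. card (Orb x) = n}"
  proof
    show "\<Union>?F \<subseteq> {x \<in> S. card (Orb x) = n}"
    proof
      fix y assume "y \<in> \<Union>?F"
      then obtain x where x: "x \<in> S" "y \<in> Orb x" "card (Orb x) = n"
        by blast
      thus "y \<in> {x \<in> S. card (Orb x) = n}"
        using Orb(2)[OF x(1)] Orb(3)[OF x(1,2)] by auto
    qed
    show "{x \<in> S. card (Orb x) = n} \<subseteq> \<Union>?F"
      using Orb by blast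
  qed
  have "?F \<subseteq> Pow S"
    using Orb by blast
  hence "finite ?F"
    using assms(1) by (simp add: finite_subset)
  hence "n * card ?F = card (\<Union>?F)"
  proof (rule card_partition)
    show "finite (\<Union>?F)"
      unfolding Union using assms(1) by simp
    show "card L = n" if "L \<in> ?F" for L
      using that by blast
    fix L1 L2 assume "L1 \<in> ?F" "L2 \<in> ?F" "L1 \<noteq> L2"
    then obtain x1 x2 where "x1 \<in> S" "L1 = Orb x1" "x2 \<in> S" "L2 = Orb x2"
      by blast
    thus "L1 \<inter> L2 = {}"
      using Orb(3) \<open>L1 \<noteq> L2\<close> by blast
  qed
  thus ?thesis
    unfolding Union .
qed

lemma big_orbits_of_size:
  "{L \<in> big_orbits Os. card L = n} = (if 1 < n then {L \<in> Os. card L = n} else {})"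
  unfolding big_orbits_def by auto

lemma graph_iso_orbit_adj_of_card_eq:
  assumes V: "finite V" and W: "finite W"
    and counts: "\<And>n. card {L \<in> V. card L = n} = card {L \<in> W. card L = n}"
  shows "graph_iso V orbit_adj W orbit_adj"
proof -
  have "\<forall>n. \<exists>g. bij_betw g {L \<in> V. card L = n} {L \<in> W. card L = n}"
    using finite_same_card_bij[OF _ _ counts] V W by simp
  then obtain g where g: "\<And>n. bij_betw (g n) {L \<in> V. card L = n} {L \<in> W. card L = n}"
    by metis
  define f where "f L = g (card L) L" for L
  have f_size: "bij_betw f {L \<in> V. card L = n} {L \<in> W. card L = n}" for n
    using g[of n] bij_betw_cong[of "{L \<in> V. card L = n}" f "g n"] by (simp add: f_def)
  have "bij_betw f (\<Union>n. {L \<in> V. card L = n}) (\<Union>n. {L \<in> W. card L = n})"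
    by (rule bij_betw_UNION_disjoint[OF _ f_size]) (auto simp: disjoint_family_on_def)
  moreover have "(\<Union>n. {L \<in> V. card L = n}) = V" "(\<Union>n. {L \<in> W. card L = n}) = W"
    by blast+
  ultimately have bij: "bij_betw f V W"
    by simp
  have card_f: "card (f L) = card L" if "L \<in> V" for L
    using bij_betw_apply[OF f_size[of "card L"]] that by simp
  show ?thesis
    unfolding graph_iso_def orbit_adj_def
  proof (intro exI conjI ballI)
    fix u v assume "u \<in> V" "v \<in> V"
    thus "(u \<noteq> v \<and> gcd (card u) (card v) \<noteq> 1) \<longleftrightarrow> (f u \<noteq> f v \<and> gcd (card (f u)) (card (f v)) \<noteq> 1)"
      using inj_on_eq_iff[OF bij_betw_imp_inj_on[OF bij]] card_f by simp
  qed (rule bij)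
qed

lemma graph_iso_big_orbits:
  assumes S: "finite S" "orbit_map S O1" and T: "finite T" "orbit_map T O2"
    and counts: "\<And>n. card {x \<in> S. card (O1 x) = n} = card {y \<in> T. card (O2 y) = n}"
  shows "graph_iso (big_orbits {O1 x | x. x \<in> S}) orbit_adj (big_orbits {O2 y | y. y \<in> T}) orbit_adj"
proof (rule graph_iso_orbit_adj_of_card_eq)
  show "finite (big_orbits {O1 x | x. x \<in> S})" "finite (big_orbits {O2 y | y. y \<in> T})"
    unfolding big_orbits_def Setcompr_eq_image using S(1) T(1) by simp_all
  fix n
  have "n * card {L \<in> {O1 x | x. x \<in> S}. card L = n} = n * card {L \<in> {O2 y | y. y \<in> T}. card L = n}"
    using card_orbits_of_size[OF S, of n] card_orbits_of_size[OF T, of n] counts[of n] by simp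
  thus "card {L \<in> big_orbits {O1 x | x. x \<in> S}. card L = n} = card {L \<in> big_orbits {O2 y | y. y \<in> T}. card L = n}"
    unfolding big_orbits_of_size by auto
qed

lemma card_fibre_blockwise:
  assumes "finite S" "\<Union>R = S" "pairwise disjnt R" "\<And>U. U \<in> R \<Longrightarrow> card U = k"
    and const: "\<And>U x x'. \<lbrakk>U \<in> R; x \<in> U; x' \<in> U\<rbrakk> \<Longrightarrow> f x = f x'"
  shows "card {x \<in> S. f x = c} = k * card {U \<in> R. \<exists>x\<in>U. f x = c}"
proof -
  let ?R = "{U \<in> R. \<exists>x\<in>U. f x = c}"
  have Union: "\<Union>?R = {x \<in> S. f x = c}"
    using assms(2) const by blast
  have "finite R"
    using assms(1,2) finite_UnionD by blast
  hence "finite ?R"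
    by simp
  hence "k * card ?R = card (\<Union>?R)"
  proof (rule card_partition)
    show "finite (\<Union>?R)"
      unfolding Union using assms(1) by simp
    show "card U = k" if "U \<in> ?R" for U
      using that assms(4) by blast
    show "U1 \<inter> U2 = {}" if "U1 \<in> ?R" "U2 \<in> ?R" "U1 \<noteq> U2" for U1 U2
      using assms(3) that unfolding pairwise_def disjnt_def by blast
  qed
  thus ?thesis
    unfolding Union by simp
qed

lemma card_fibre_eq_blockwise:
  assumes S: "finite S" "\<Union>R = S" "pairwise disjnt R" "\<And>U. U \<in> R \<Longrightarrow> card U = k"
    and T: "finite T" "\<Union>R' = T" "pairwise disjnt R'" "\<And>V. V \<in> R' \<Longrightarrow> card V = k"
    and "0 < k" and bij: "bij_betw \<xi> R R'"
    and compat: "\<And>U x y. \<lbrakk>U \<in> R; x \<in> U; y \<in> \<xi> U\<rbrakk> \<Longrightarrow> f x = g y"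
  shows "card {x \<in> S. f x = c} = card {y \<in> T. g y = c}"
proof -
  have R': "R' = \<xi> ` R"
    using bij by (simp add: bij_betw_def)
  have ne: "\<exists>x. x \<in> U" "\<exists>y. y \<in> \<xi> U" if "U \<in> R" for U
    using S(4)[OF that] T(4)[OF bij_betw_apply[OF bij that]] \<open>0 < k\<close>
    by (metis card_gt_0_iff ex_in_conv)+
  have const: "f x = f x'" if "U \<in> R" "x \<in> U" "x' \<in> U" for U x x'
    using ne(2)[OF that(1)] compat that by metis
  have const': "g y = g y'" if V: "V \<in> R'" "y \<in> V" "y' \<in> V" for V y y'
  proof -
    obtain U where U: "U \<in> R" "V = \<xi> U"
      using V(1) unfolding R' by blast
    obtain x where "x \<in> U"
      using ne(1)[OF U(1)] by blast
    thus ?thesis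
      using compat U V by metis
  qed
  have same_value: "(\<exists>x\<in>U. f x = c) \<longleftrightarrow> (\<exists>y\<in>\<xi> U. g y = c)" if U: "U \<in> R" for U
  proof -
    obtain x0 y0 where x0: "x0 \<in> U" and y0: "y0 \<in> \<xi> U"
      using ne[OF U] by blast
    have "(\<exists>x\<in>U. f x = c) \<longleftrightarrow> g y0 = c"
      using compat[OF U _ y0] x0 by metis
    moreover have "(\<exists>y\<in>\<xi> U. g y = c) \<longleftrightarrow> g y0 = c"
      using compat[OF U x0] y0 by metis
    ultimately show ?thesis
      by blast
  qed
  have "card {x \<in> S. f x = c} = k * card {U \<in> R. \<exists>x\<in>U. f x = c}"
    using card_fibre_blockwise[OF S const] .
  also have "card {U \<in> R. \<exists>x\<in>U. f x = c} = card (\<xi> ` {U \<in> R. \<exists>x\<in>U. f x = c})"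
    using bij_betw_imp_inj_on[OF bij] by (simp add: card_image inj_on_subset)
  also have "{U \<in> R. \<exists>x\<in>U. f x = c} = {U \<in> R. \<exists>y\<in>\<xi> U. g y = c}"
    using same_value by (simp cong: conj_cong)
  also have "\<xi> ` {U \<in> R. \<exists>y\<in>\<xi> U. g y = c} = {V \<in> R'. \<exists>y\<in>V. g y = c}"
    unfolding R' by blast
  also have "k * card {V \<in> R'. \<exists>y\<in>V. g y = c} = card {y \<in> T. g y = c}"
    using card_fibre_blockwise[OF T const', symmetric] .
  finally show ?thesis .
qed

lemma image_eq_by_correspondence:
  assumes left: "\<And>i. i \<in> I \<Longrightarrow> \<exists>j\<in>J. R i j" and right: "\<And>j. j \<in> J \<Longrightarrow> \<exists>i\<in>I. R i j"
    and eq: "\<And>i j. \<lbrakk>i \<in> I; j \<in> J; R i j\<rbrakk> \<Longrightarrow> f i = g j"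
  shows "f ` I = g ` J"
proof
  show "f ` I \<subseteq> g ` J"
  proof
    fix y assume "y \<in> f ` I"
    then obtain i where i: "i \<in> I" "y = f i"
      by blast
    then obtain j where "j \<in> J" "R i j"
      using left by blast
    thus "y \<in> g ` J"
      using eq i by blast
  qed
  show "g ` J \<subseteq> f ` I"
  proof
    fix y assume "y \<in> g ` J"
    then obtain j where j: "j \<in> J" "y = g j"
      by blast
    then obtain i where "i \<in> I" "R i j"
      using right by blast
    thus "y \<in> f ` I"
      using eq j by (metis image_eqI)
  qed
qed

section \<open>Skew braces\<close>

locale skewbrace =
  fixes P C :: "'a monoid"
  assumes skew_brace: "skew_brace P C"
begin

sublocale P: group P
  using skew_brace unfolding skew_brace_def by blast

sublocale C: group C
  using skew_brace unfolding skew_brace_def by blast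

lemma carrier_circ [simp]: "carrier C = carrier P"
  using skew_brace unfolding skew_brace_def by blast

lemma brace_distrib:
  "\<lbrakk>a \<in> carrier P; b \<in> carrier P; c \<in> carrier P\<rbrakk> \<Longrightarrow>
    a \<otimes>\<^bsub>C\<^esub> (b \<otimes>\<^bsub>P\<^esub> c) = (a \<otimes>\<^bsub>C\<^esub> b) \<otimes>\<^bsub>P\<^esub> inv\<^bsub>P\<^esub> a \<otimes>\<^bsub>P\<^esub> (a \<otimes>\<^bsub>C\<^esub> c)"
  using skew_brace unfolding skew_brace_def by blast

lemma circ_closed [simp]: "\<lbrakk>a \<in> carrier P; b \<in> carrier P\<rbrakk> \<Longrightarrow> a \<otimes>\<^bsub>C\<^esub> b \<in> carrier P"
  using C.m_closed by simp

lemma circ_inv_closed [simp]: "a \<in> carrier P \<Longrightarrow> inv\<^bsub>C\<^esub> a \<in> carrier P"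
  using C.inv_closed by simp

lemma one_circ [simp]: "\<one>\<^bsub>C\<^esub> = \<one>\<^bsub>P\<^esub>"
proof -
  have "\<one>\<^bsub>C\<^esub> \<otimes>\<^bsub>C\<^esub> \<one>\<^bsub>P\<^esub> = \<one>\<^bsub>P\<^esub>"
    using C.l_one[of "\<one>\<^bsub>P\<^esub>"] by simp
  hence "\<one>\<^bsub>P\<^esub> = \<one>\<^bsub>P\<^esub> \<otimes>\<^bsub>P\<^esub> inv\<^bsub>P\<^esub> \<one>\<^bsub>C\<^esub> \<otimes>\<^bsub>P\<^esub> \<one>\<^bsub>P\<^esub>"
    using brace_distrib[of "\<one>\<^bsub>C\<^esub>" "\<one>\<^bsub>P\<^esub>" "\<one>\<^bsub>P\<^esub>"] C.one_closed by simp
  hence "inv\<^bsub>P\<^esub> \<one>\<^bsub>C\<^esub> = \<one>\<^bsub>P\<^esub>"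
    using C.one_closed by simp
  thus ?thesis
    using C.one_closed by (metis P.inv_inv P.inv_one carrier_circ)
qed

lemma circ_one_left [simp]: "x \<in> carrier P \<Longrightarrow> \<one>\<^bsub>P\<^esub> \<otimes>\<^bsub>C\<^esub> x = x"
  using C.l_one by simp

lemma circ_one_right [simp]: "x \<in> carrier P \<Longrightarrow> x \<otimes>\<^bsub>C\<^esub> \<one>\<^bsub>P\<^esub> = x"
  using C.r_one by simp

lemma circ_inv_left [simp]: "x \<in> carrier P \<Longrightarrow> inv\<^bsub>C\<^esub> x \<otimes>\<^bsub>C\<^esub> x = \<one>\<^bsub>P\<^esub>"
  using C.l_inv by simp

lemma circ_assoc:
  "\<lbrakk>x \<in> carrier P; y \<in> carrier P; z \<in> carrier P\<rbrakk> \<Longrightarrow> x \<otimes>\<^bsub>C\<^esub> y \<otimes>\<^bsub>C\<^esub> z = x \<otimes>\<^bsub>C\<^esub> (y \<otimes>\<^bsub>C\<^esub> z)"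
  using C.m_assoc by simp

lemma lam_closed [simp]: "\<lbrakk>a \<in> carrier P; b \<in> carrier P\<rbrakk> \<Longrightarrow> lam P C a b \<in> carrier P"
  unfolding lam_def by simp

lemma lam_one [simp]: "b \<in> carrier P \<Longrightarrow> lam P C \<one>\<^bsub>P\<^esub> b = b"
  unfolding lam_def by simp

lemma mult_lam: "\<lbrakk>a \<in> carrier P; b \<in> carrier P\<rbrakk> \<Longrightarrow> a \<otimes>\<^bsub>P\<^esub> lam P C a b = a \<otimes>\<^bsub>C\<^esub> b"
  unfolding lam_def by (simp add: P.m_assoc[symmetric])

lemma lam_mult:
  "\<lbrakk>a \<in> carrier P; x \<in> carrier P; y \<in> carrier P\<rbrakk> \<Longrightarrow>
    lam P C a (x \<otimes>\<^bsub>P\<^esub> y) = lam P C a x \<otimes>\<^bsub>P\<^esub> lam P C a y"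
  unfolding lam_def by (simp add: brace_distrib P.m_assoc)

lemma lam_lam:
  assumes a: "a \<in> carrier P" and b: "b \<in> carrier P" and x: "x \<in> carrier P"
  shows "lam P C a (lam P C b x) = lam P C (a \<otimes>\<^bsub>C\<^esub> b) x"
proof -
  have "a \<otimes>\<^bsub>C\<^esub> b \<otimes>\<^bsub>C\<^esub> x = a \<otimes>\<^bsub>C\<^esub> (b \<otimes>\<^bsub>P\<^esub> lam P C b x)"
    using a b x by (simp add: circ_assoc mult_lam)
  also have "\<dots> = (a \<otimes>\<^bsub>C\<^esub> b) \<otimes>\<^bsub>P\<^esub> (inv\<^bsub>P\<^esub> a \<otimes>\<^bsub>P\<^esub> (a \<otimes>\<^bsub>C\<^esub> lam P C b x))"
    using a b x by (simp add: brace_distrib P.m_assoc)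
  finally show ?thesis
    unfolding lam_def using a b x by (simp add: P.inv_mult_cancel_left)
qed

lemma lam_one_right [simp]: "a \<in> carrier P \<Longrightarrow> lam P C a \<one>\<^bsub>P\<^esub> = \<one>\<^bsub>P\<^esub>"
  using lam_mult[of a "\<one>\<^bsub>P\<^esub>" "\<one>\<^bsub>P\<^esub>"] by simp

lemma lam_inv: "\<lbrakk>a \<in> carrier P; x \<in> carrier P\<rbrakk> \<Longrightarrow> lam P C a (inv\<^bsub>P\<^esub> x) = inv\<^bsub>P\<^esub> lam P C a x"
  using lam_mult[of a "inv\<^bsub>P\<^esub> x" x] by (simp add: P.inv_equality)

lemma theta_closed [simp]: "\<lbrakk>a \<in> carrier P; b \<in> carrier P; c \<in> carrier P\<rbrakk> \<Longrightarrow> theta P C a b c \<in> carrier P"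
  unfolding theta_def by simp

lemma theta_one [simp]: "c \<in> carrier P \<Longrightarrow> theta P C \<one>\<^bsub>P\<^esub> \<one>\<^bsub>P\<^esub> c = c"
  unfolding theta_def by simp

lemma theta_theta:
  "\<lbrakk>a \<in> carrier P; b \<in> carrier P; a' \<in> carrier P; b' \<in> carrier P; c \<in> carrier P\<rbrakk> \<Longrightarrow>
    theta P C a b (theta P C a' b' c) = theta P C (a \<otimes>\<^bsub>P\<^esub> lam P C b a') (b \<otimes>\<^bsub>C\<^esub> b') c"
  unfolding theta_def by (simp add: lam_mult lam_inv lam_lam P.m_assoc P.inv_mult_group)

lemma lam_eq_bstar: "\<lbrakk>a \<in> carrier P; b \<in> carrier P\<rbrakk> \<Longrightarrow> lam P C a b = bstar P C a b \<otimes>\<^bsub>P\<^esub> b"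
  unfolding bstar_def by (simp add: P.m_assoc)

lemma theta_eq_acomm_bstar:
  "\<lbrakk>a \<in> carrier P; b \<in> carrier P; x \<in> carrier P\<rbrakk> \<Longrightarrow>
    theta P C a b x = acomm P a (lam P C b x) \<otimes>\<^bsub>P\<^esub> bstar P C b x \<otimes>\<^bsub>P\<^esub> x"
  unfolding theta_def acomm_def bstar_def by (simp add: P.m_assoc P.inv_mult_cancel_left)

lemma bstar_closed [simp]: "\<lbrakk>a \<in> carrier P; b \<in> carrier P\<rbrakk> \<Longrightarrow> bstar P C a b \<in> carrier P"
  unfolding bstar_def by simp

lemma acomm_closed [simp]: "\<lbrakk>a \<in> carrier P; b \<in> carrier P\<rbrakk> \<Longrightarrow> acomm P a b \<in> carrier P"
  unfolding acomm_def by simp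

lemma Ann_iff:
  "z \<in> Ann P C \<longleftrightarrow> z \<in> carrier P \<and> (\<forall>b\<in>carrier P. lam P C z b = b) \<and>
     (\<forall>b\<in>carrier P. z \<otimes>\<^bsub>P\<^esub> b = b \<otimes>\<^bsub>P\<^esub> z) \<and> (\<forall>b\<in>carrier P. z \<otimes>\<^bsub>C\<^esub> b = b \<otimes>\<^bsub>C\<^esub> z)"
  unfolding Ann_def Soc_def by auto

lemma Ann_subset: "Ann P C \<subseteq> carrier P"
  using Ann_iff by blast

lemma Ann_lam: "\<lbrakk>z \<in> Ann P C; b \<in> carrier P\<rbrakk> \<Longrightarrow> lam P C z b = b"
  using Ann_iff by blast

lemma Ann_mult_commute: "\<lbrakk>z \<in> Ann P C; b \<in> carrier P\<rbrakk> \<Longrightarrow> z \<otimes>\<^bsub>P\<^esub> b = b \<otimes>\<^bsub>P\<^esub> z"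
  using Ann_iff by blast

lemma Ann_circ_commute: "\<lbrakk>z \<in> Ann P C; b \<in> carrier P\<rbrakk> \<Longrightarrow> z \<otimes>\<^bsub>C\<^esub> b = b \<otimes>\<^bsub>C\<^esub> z"
  using Ann_iff by blast

lemma Ann_circ_eq_mult: "\<lbrakk>z \<in> Ann P C; x \<in> carrier P\<rbrakk> \<Longrightarrow> z \<otimes>\<^bsub>C\<^esub> x = z \<otimes>\<^bsub>P\<^esub> x"
  using mult_lam[of z x] Ann_lam[of z x] Ann_subset by auto

lemma Ann_inv_circ:
  assumes "z \<in> Ann P C"
  shows "inv\<^bsub>C\<^esub> z = inv\<^bsub>P\<^esub> z"
proof -
  have z: "z \<in> carrier P"
    using assms Ann_subset by blast
  have "inv\<^bsub>P\<^esub> z \<otimes>\<^bsub>C\<^esub> z = z \<otimes>\<^bsub>C\<^esub> inv\<^bsub>P\<^esub> z"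
    using Ann_circ_commute[OF assms] z by simp
  also have "\<dots> = \<one>\<^bsub>P\<^esub>"
    using Ann_circ_eq_mult[OF assms] z by simp
  finally show ?thesis
    using C.inv_equality[of "inv\<^bsub>P\<^esub> z" z] z by simp
qed

lemma one_in_Ann: "\<one>\<^bsub>P\<^esub> \<in> Ann P C"
  by (simp add: Ann_iff)

lemma Ann_inv_closed:
  assumes "z \<in> Ann P C"
  shows "inv\<^bsub>P\<^esub> z \<in> Ann P C"
proof -
  have z: "z \<in> carrier P"
    using assms Ann_subset by blast
  have "lam P C (inv\<^bsub>P\<^esub> z) b = b" if "b \<in> carrier P" for b
  proof -
    have "lam P C (inv\<^bsub>P\<^esub> z) b = lam P C (inv\<^bsub>C\<^esub> z) (lam P C z b)"
      using Ann_lam[OF assms that] Ann_inv_circ[OF assms] by simp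
    also have "\<dots> = b"
      using z that by (simp add: lam_lam)
    finally show ?thesis .
  qed
  moreover have "inv\<^bsub>P\<^esub> z \<otimes>\<^bsub>P\<^esub> b = b \<otimes>\<^bsub>P\<^esub> inv\<^bsub>P\<^esub> z" if "b \<in> carrier P" for b
    using P.inv_commute[OF Ann_mult_commute[OF assms that]] z that by simp
  moreover have "inv\<^bsub>P\<^esub> z \<otimes>\<^bsub>C\<^esub> b = b \<otimes>\<^bsub>C\<^esub> inv\<^bsub>P\<^esub> z" if "b \<in> carrier P" for b
    using C.inv_commute[OF Ann_circ_commute[OF assms that]] Ann_inv_circ[OF assms] z that by simp
  ultimately show ?thesis
    using z by (simp add: Ann_iff)
qed

lemma Ann_mult_closed:
  assumes z: "z \<in> Ann P C" and w: "w \<in> Ann P C"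
  shows "z \<otimes>\<^bsub>P\<^esub> w \<in> Ann P C"
proof -
  have zc: "z \<in> carrier P" and wc: "w \<in> carrier P"
    using z w Ann_subset by auto
  have "lam P C (z \<otimes>\<^bsub>C\<^esub> w) b = b" if "b \<in> carrier P" for b
    using lam_lam[OF zc wc that] Ann_lam[OF w that] Ann_lam[OF z that] by simp
  moreover have "z \<otimes>\<^bsub>C\<^esub> w \<otimes>\<^bsub>P\<^esub> b = b \<otimes>\<^bsub>P\<^esub> (z \<otimes>\<^bsub>C\<^esub> w)" if "b \<in> carrier P" for b
    using P.mult_commute[OF Ann_mult_commute[OF z that] Ann_mult_commute[OF w that]] zc wc that
    by (simp add: Ann_circ_eq_mult[OF z])
  moreover have "z \<otimes>\<^bsub>C\<^esub> w \<otimes>\<^bsub>C\<^esub> b = b \<otimes>\<^bsub>C\<^esub> (z \<otimes>\<^bsub>C\<^esub> w)" if "b \<in> carrier P" for b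
    using C.mult_commute[OF Ann_circ_commute[OF z that] Ann_circ_commute[OF w that]] zc wc that
    by simp
  ultimately have "z \<otimes>\<^bsub>C\<^esub> w \<in> Ann P C"
    using zc wc by (simp add: Ann_iff)
  thus ?thesis
    using Ann_circ_eq_mult[OF z wc] by simp
qed

lemma subgroup_Ann: "subgroup (Ann P C) P"
  by (rule P.subgroupI) (use Ann_subset one_in_Ann Ann_inv_closed Ann_mult_closed in auto)

lemma subgroup_Ann_circ: "subgroup (Ann P C) C"
proof (rule C.subgroupI)
  show "Ann P C \<subseteq> carrier C" "Ann P C \<noteq> {}"
    using Ann_subset one_in_Ann by auto
  show "inv\<^bsub>C\<^esub> z \<in> Ann P C" if "z \<in> Ann P C" for z
    using Ann_inv_closed[OF that] Ann_inv_circ[OF that] by simp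
  show "z \<otimes>\<^bsub>C\<^esub> w \<in> Ann P C" if "z \<in> Ann P C" "w \<in> Ann P C" for z w
    using Ann_mult_closed[OF that] Ann_circ_eq_mult[OF that(1)] that(2) Ann_subset by auto
qed

lemma normal_Ann: "Ann P C \<lhd> P"
  by (rule P.normal_of_central[OF subgroup_Ann Ann_mult_commute])

lemma normal_Ann_circ: "Ann P C \<lhd> C"
  by (rule C.normal_of_central[OF subgroup_Ann_circ]) (metis Ann_circ_commute carrier_circ)

lemma rcoset_circ_Ann: "x \<in> carrier P \<Longrightarrow> Ann P C #>\<^bsub>C\<^esub> x = Ann P C #>\<^bsub>P\<^esub> x"
  unfolding r_coset_def using Ann_circ_eq_mult by (intro SUP_cong) auto

definition lambda_orbit :: "'a \<Rightarrow> 'a set" where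
  "lambda_orbit x = {lam P C a x | a. a \<in> carrier P}"

definition theta_orbit :: "'a \<Rightarrow> 'a set" where
  "theta_orbit x = {theta P C a b x | a b. a \<in> carrier P \<and> b \<in> carrier P}"

lemma lambda_orbits_eq: "lambda_orbits P C = {lambda_orbit x | x. x \<in> carrier P}"
  unfolding lambda_orbits_def lambda_orbit_def ..

lemma theta_orbits_eq: "theta_orbits P C = {theta_orbit x | x. x \<in> carrier P}"
  unfolding theta_orbits_def theta_orbit_def ..

lemma orbit_map_lambda_orbit: "orbit_map (carrier P) lambda_orbit"
proof (rule orbit_mapI)
  fix x assume x: "x \<in> carrier P"
  show "x \<in> lambda_orbit x"
    unfolding lambda_orbit_def using x by (auto intro!: exI[of _ "\<one>\<^bsub>P\<^esub>"])
  show "lambda_orbit x \<subseteq> carrier P"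
    unfolding lambda_orbit_def using x by auto
next
  fix x y z assume x: "x \<in> carrier P" and "y \<in> lambda_orbit x" "z \<in> lambda_orbit y"
  then obtain a b where a: "a \<in> carrier P" "y = lam P C a x" and b: "b \<in> carrier P" "z = lam P C b y"
    unfolding lambda_orbit_def by blast
  have "z = lam P C (b \<otimes>\<^bsub>C\<^esub> a) x"
    using a b x by (simp add: lam_lam)
  thus "z \<in> lambda_orbit x"
    unfolding lambda_orbit_def using circ_closed[OF b(1) a(1)] by blast
next
  fix x y assume x: "x \<in> carrier P" and "y \<in> lambda_orbit x"
  then obtain a where a: "a \<in> carrier P" "y = lam P C a x"
    unfolding lambda_orbit_def by blast
  have "x = lam P C (inv\<^bsub>C\<^esub> a) y"
    using a x by (simp add: lam_lam)
  thus "x \<in> lambda_orbit y"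
    unfolding lambda_orbit_def using circ_inv_closed[OF a(1)] by blast
qed

lemma orbit_map_theta_orbit: "orbit_map (carrier P) theta_orbit"
proof (rule orbit_mapI)
  fix x assume x: "x \<in> carrier P"
  show "x \<in> theta_orbit x"
    unfolding theta_orbit_def using x by (auto intro!: exI[of _ "\<one>\<^bsub>P\<^esub>"])
  show "theta_orbit x \<subseteq> carrier P"
    unfolding theta_orbit_def using x by auto
next
  fix x y z assume x: "x \<in> carrier P" and "y \<in> theta_orbit x" "z \<in> theta_orbit y"
  then obtain a b a' b' where ab: "a \<in> carrier P" "b \<in> carrier P" "z = theta P C a b y"
    and ab': "a' \<in> carrier P" "b' \<in> carrier P" "y = theta P C a' b' x"
    unfolding theta_orbit_def by blast
  have "z = theta P C (a \<otimes>\<^bsub>P\<^esub> lam P C b a') (b \<otimes>\<^bsub>C\<^esub> b') x"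
    using ab ab' x by (simp add: theta_theta)
  moreover have "a \<otimes>\<^bsub>P\<^esub> lam P C b a' \<in> carrier P" "b \<otimes>\<^bsub>C\<^esub> b' \<in> carrier P"
    using ab ab' by simp_all
  ultimately show "z \<in> theta_orbit x"
    unfolding theta_orbit_def by blast
next
  fix x y assume x: "x \<in> carrier P" and "y \<in> theta_orbit x"
  then obtain a b where ab: "a \<in> carrier P" "b \<in> carrier P" "y = theta P C a b x"
    unfolding theta_orbit_def by blast
  define b' where "b' = inv\<^bsub>C\<^esub> b"
  define a' where "a' = inv\<^bsub>P\<^esub> lam P C b' a"
  have b': "b' \<in> carrier P" and a': "a' \<in> carrier P"
    unfolding a'_def b'_def using ab by simp_all
  have "x = theta P C a' b' y"
    unfolding a'_def b'_def using ab x by (simp add: theta_theta)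
  thus "x \<in> theta_orbit y"
    unfolding theta_orbit_def using a' b' by blast
qed

lemma lambda_orbit_eq_rcoset:
  assumes "x \<in> carrier P"
  shows "lambda_orbit x = (\<lambda>a. bstar P C a x) ` carrier P #>\<^bsub>P\<^esub> x"
proof -
  have "lambda_orbit x = (\<lambda>a. bstar P C a x \<otimes>\<^bsub>P\<^esub> x) ` carrier P"
    unfolding lambda_orbit_def Setcompr_eq_image using assms by (simp add: lam_eq_bstar)
  thus ?thesis
    unfolding r_coset_def UNION_singleton_eq_range image_image .
qed

lemma theta_orbit_eq_rcoset:
  assumes "x \<in> carrier P"
  shows "theta_orbit x =
    (\<lambda>(a, b). acomm P a (lam P C b x) \<otimes>\<^bsub>P\<^esub> bstar P C b x) ` (carrier P \<times> carrier P) #>\<^bsub>P\<^esub> x"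
proof -
  have "theta_orbit x = (\<lambda>(a, b). theta P C a b x) ` (carrier P \<times> carrier P)"
    unfolding theta_orbit_def by auto
  also have "\<dots> = (\<lambda>(a, b). acomm P a (lam P C b x) \<otimes>\<^bsub>P\<^esub> bstar P C b x \<otimes>\<^bsub>P\<^esub> x) ` (carrier P \<times> carrier P)"
    using assms by (intro image_cong) (auto simp: theta_eq_acomm_bstar)
  finally show ?thesis
    unfolding r_coset_def UNION_singleton_eq_range image_image by (simp add: case_prod_beta)
qed

lemma card_lambda_orbit:
  "x \<in> carrier P \<Longrightarrow> card (lambda_orbit x) = card ((\<lambda>a. bstar P C a x) ` carrier P)"
  unfolding lambda_orbit_eq_rcoset by (rule P.card_rcoset) auto

lemma card_theta_orbit:
  "x \<in> carrier P \<Longrightarrow> card (theta_orbit x) =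
     card ((\<lambda>(a, b). acomm P a (lam P C b x) \<otimes>\<^bsub>P\<^esub> bstar P C b x) ` (carrier P \<times> carrier P))"
  unfolding theta_orbit_eq_rcoset by (rule P.card_rcoset) auto

end

section \<open>Isoclinic skew braces\<close>

lemma bstar_in_derived: "\<lbrakk>a \<in> carrier P; b \<in> carrier P\<rbrakk> \<Longrightarrow> bstar P C a b \<in> derived P C"
  unfolding derived_def by (rule generate.incl) blast

lemma acomm_in_derived: "\<lbrakk>a \<in> carrier P; b \<in> carrier P\<rbrakk> \<Longrightarrow> acomm P a b \<in> derived P C"
  unfolding derived_def by (rule generate.incl) blast

lemma derived_mult: "\<lbrakk>u \<in> derived P C; v \<in> derived P C\<rbrakk> \<Longrightarrow> u \<otimes>\<^bsub>P\<^esub> v \<in> derived P C"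
  unfolding derived_def by (rule generate.eng)

locale skew_brace_isoclinism = A: skewbrace P C + B: skewbrace Q D
  for P C :: "'a monoid" and Q D :: "'b monoid" +
  fixes \<xi> :: "'a set \<Rightarrow> 'b set" and \<delta> :: "'a \<Rightarrow> 'b"
  assumes quot_iso: "quot_iso P C Q D \<xi>"
    and delta_iso: "\<delta> \<in> iso (P\<lparr>carrier := derived P C\<rparr>) (Q\<lparr>carrier := derived Q D\<rparr>)"
    and delta_compat: "\<forall>a\<in>carrier P. \<forall>b\<in>carrier P. \<forall>a1\<in>carrier Q. \<forall>b1\<in>carrier Q.
           \<xi> (r_coset P (Ann P C) a) = r_coset Q (Ann Q D) a1 \<longrightarrow>
           \<xi> (r_coset P (Ann P C) b) = r_coset Q (Ann Q D) b1 \<longrightarrow>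
           \<delta> (acomm P a b) = acomm Q a1 b1 \<and> \<delta> (bstar P C a b) = bstar Q D a1 b1"
begin

definition corresp :: "'a \<Rightarrow> 'b \<Rightarrow> bool" where
  "corresp x y \<longleftrightarrow> x \<in> carrier P \<and> y \<in> carrier Q \<and> \<xi> (Ann P C #>\<^bsub>P\<^esub> x) = Ann Q D #>\<^bsub>Q\<^esub> y"

lemma xi_bij: "bij_betw \<xi> (rcosets\<^bsub>P\<^esub> Ann P C) (rcosets\<^bsub>Q\<^esub> Ann Q D)"
  using quot_iso unfolding quot_iso_def by blast

lemma corresp_carrier: "corresp x y \<Longrightarrow> x \<in> carrier P \<and> y \<in> carrier Q"
  unfolding corresp_def by blast

lemma corresp_left_total: "x \<in> carrier P \<Longrightarrow> \<exists>y\<in>carrier Q. corresp x y"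
  using bij_betw_apply[OF xi_bij A.P.rcosetsI[OF A.Ann_subset]]
  unfolding corresp_def RCOSETS_def by blast

lemma corresp_right_total: "y \<in> carrier Q \<Longrightarrow> \<exists>x\<in>carrier P. corresp x y"
proof -
  assume "y \<in> carrier Q"
  hence "Ann Q D #>\<^bsub>Q\<^esub> y \<in> \<xi> ` (rcosets\<^bsub>P\<^esub> Ann P C)"
    using B.P.rcosetsI[OF B.Ann_subset] xi_bij by (simp add: bij_betw_def)
  thus ?thesis
    using \<open>y \<in> carrier Q\<close> unfolding corresp_def RCOSETS_def by blast
qed

lemma corresp_mult:
  assumes a: "corresp a a1" and b: "corresp b b1"
  shows "corresp (a \<otimes>\<^bsub>P\<^esub> b) (a1 \<otimes>\<^bsub>Q\<^esub> b1)"
proof -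
  have in_carrier: "a \<in> carrier P" "b \<in> carrier P" "a1 \<in> carrier Q" "b1 \<in> carrier Q"
    using a b corresp_carrier by blast+
  have "\<xi> (Ann P C #>\<^bsub>P\<^esub> (a \<otimes>\<^bsub>P\<^esub> b)) = \<xi> ((Ann P C #>\<^bsub>P\<^esub> a) <#>\<^bsub>P\<^esub> (Ann P C #>\<^bsub>P\<^esub> b))"
    using normal.rcos_sum[OF A.normal_Ann] in_carrier by simp
  also have "\<dots> = (Ann Q D #>\<^bsub>Q\<^esub> a1) <#>\<^bsub>Q\<^esub> (Ann Q D #>\<^bsub>Q\<^esub> b1)"
    using quot_iso a b A.P.rcosetsI[OF A.Ann_subset] in_carrier
    unfolding quot_iso_def corresp_def by simp
  also have "\<dots> = Ann Q D #>\<^bsub>Q\<^esub> (a1 \<otimes>\<^bsub>Q\<^esub> b1)"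
    using normal.rcos_sum[OF B.normal_Ann] in_carrier by simp
  finally show ?thesis
    unfolding corresp_def using in_carrier by simp
qed

lemma corresp_circ:
  assumes a: "corresp a a1" and b: "corresp b b1"
  shows "corresp (a \<otimes>\<^bsub>C\<^esub> b) (a1 \<otimes>\<^bsub>D\<^esub> b1)"
proof -
  have in_carrier: "a \<in> carrier P" "b \<in> carrier P" "a1 \<in> carrier Q" "b1 \<in> carrier Q"
    using a b corresp_carrier by blast+
  have "\<xi> (Ann P C #>\<^bsub>P\<^esub> (a \<otimes>\<^bsub>C\<^esub> b)) = \<xi> ((Ann P C #>\<^bsub>P\<^esub> a) <#>\<^bsub>C\<^esub> (Ann P C #>\<^bsub>P\<^esub> b))"
    using normal.rcos_sum[OF A.normal_Ann_circ] in_carrier by (simp add: A.rcoset_circ_Ann)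
  also have "\<dots> = (Ann Q D #>\<^bsub>Q\<^esub> a1) <#>\<^bsub>D\<^esub> (Ann Q D #>\<^bsub>Q\<^esub> b1)"
    using quot_iso a b A.P.rcosetsI[OF A.Ann_subset] in_carrier
    unfolding quot_iso_def corresp_def by simp
  also have "\<dots> = Ann Q D #>\<^bsub>Q\<^esub> (a1 \<otimes>\<^bsub>D\<^esub> b1)"
    using normal.rcos_sum[OF B.normal_Ann_circ] in_carrier by (simp add: B.rcoset_circ_Ann)
  finally show ?thesis
    unfolding corresp_def using in_carrier by simp
qed

lemma corresp_lam:
  assumes b: "corresp b b1" and x: "corresp x x1"
  shows "corresp (lam P C b x) (lam Q D b1 x1)"
proof -
  have in_carrier: "b \<in> carrier P" "x \<in> carrier P" "b1 \<in> carrier Q" "x1 \<in> carrier Q"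
    using b x corresp_carrier by blast+
  txt \<open>Since \<open>b + \<lambda>\<^sub>b(x) = b \<circ> x\<close>, the class of \<open>\<lambda>\<^sub>b(x)\<close> is forced by cancelling the class of \<open>b\<close>.\<close>
  obtain w where w_carrier: "w \<in> carrier Q" and w: "corresp (lam P C b x) w"
    using corresp_left_total[of "lam P C b x"] in_carrier by auto
  have "corresp (b \<otimes>\<^bsub>C\<^esub> x) (b1 \<otimes>\<^bsub>Q\<^esub> w)"
    using corresp_mult[OF b w] A.mult_lam in_carrier by simp
  moreover have "corresp (b \<otimes>\<^bsub>C\<^esub> x) (b1 \<otimes>\<^bsub>Q\<^esub> lam Q D b1 x1)"
    using corresp_circ[OF b x] B.mult_lam in_carrier by simp
  ultimately have "Ann Q D #>\<^bsub>Q\<^esub> (b1 \<otimes>\<^bsub>Q\<^esub> w) = Ann Q D #>\<^bsub>Q\<^esub> (b1 \<otimes>\<^bsub>Q\<^esub> lam Q D b1 x1)"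
    unfolding corresp_def by simp
  hence "Ann Q D #>\<^bsub>Q\<^esub> w = Ann Q D #>\<^bsub>Q\<^esub> lam Q D b1 x1"
    by (rule normal.rcos_cancel_left[OF B.normal_Ann]) (simp_all add: in_carrier w_carrier)
  thus ?thesis
    using w in_carrier unfolding corresp_def by simp
qed

lemma inj_on_delta: "inj_on \<delta> (derived P C)"
  using delta_iso unfolding iso_def bij_betw_def by simp

lemma delta_mult: "\<lbrakk>u \<in> derived P C; v \<in> derived P C\<rbrakk> \<Longrightarrow> \<delta> (u \<otimes>\<^bsub>P\<^esub> v) = \<delta> u \<otimes>\<^bsub>Q\<^esub> \<delta> v"
  using hom_mult[of \<delta> "P\<lparr>carrier := derived P C\<rparr>" "Q\<lparr>carrier := derived Q D\<rparr>" u v] delta_iso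
  unfolding iso_def by simp

lemma delta_bstar: "\<lbrakk>corresp a a1; corresp b b1\<rbrakk> \<Longrightarrow> \<delta> (bstar P C a b) = bstar Q D a1 b1"
  using delta_compat unfolding corresp_def by blast

lemma delta_acomm: "\<lbrakk>corresp a a1; corresp b b1\<rbrakk> \<Longrightarrow> \<delta> (acomm P a b) = acomm Q a1 b1"
  using delta_compat unfolding corresp_def by blast

lemma delta_image_bstar:
  assumes x: "corresp x x1"
  shows "\<delta> ` (\<lambda>a. bstar P C a x) ` carrier P = (\<lambda>a1. bstar Q D a1 x1) ` carrier Q"
  unfolding image_image
proof (rule image_eq_by_correspondence[where R = corresp])
  show "\<exists>a1\<in>carrier Q. corresp a a1" if "a \<in> carrier P" for a
    using corresp_left_total[OF that] .
  show "\<exists>a\<in>carrier P. corresp a a1" if "a1 \<in> carrier Q" for a1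
    using corresp_right_total[OF that] .
  show "\<delta> (bstar P C a x) = bstar Q D a1 x1" if "a \<in> carrier P" "a1 \<in> carrier Q" "corresp a a1" for a a1
    using delta_bstar[OF that(3) x] .
qed

lemma delta_acomm_lam_mult_bstar:
  assumes a: "corresp a a1" and b: "corresp b b1" and x: "corresp x x1"
  shows "\<delta> (acomm P a (lam P C b x) \<otimes>\<^bsub>P\<^esub> bstar P C b x) = acomm Q a1 (lam Q D b1 x1) \<otimes>\<^bsub>Q\<^esub> bstar Q D b1 x1"
proof -
  have "a \<in> carrier P" "b \<in> carrier P" "x \<in> carrier P"
    using a b x corresp_carrier by blast+
  hence "\<delta> (acomm P a (lam P C b x) \<otimes>\<^bsub>P\<^esub> bstar P C b x) =
      \<delta> (acomm P a (lam P C b x)) \<otimes>\<^bsub>Q\<^esub> \<delta> (bstar P C b x)"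
    by (simp add: delta_mult acomm_in_derived bstar_in_derived)
  also have "\<dots> = acomm Q a1 (lam Q D b1 x1) \<otimes>\<^bsub>Q\<^esub> bstar Q D b1 x1"
    using delta_acomm[OF a corresp_lam[OF b x]] delta_bstar[OF b x] by simp
  finally show ?thesis .
qed

lemma delta_image_acomm_lam_mult_bstar:
  assumes x: "corresp x x1"
  shows "\<delta> ` (\<lambda>(a, b). acomm P a (lam P C b x) \<otimes>\<^bsub>P\<^esub> bstar P C b x) ` (carrier P \<times> carrier P) =
    (\<lambda>(a1, b1). acomm Q a1 (lam Q D b1 x1) \<otimes>\<^bsub>Q\<^esub> bstar Q D b1 x1) ` (carrier Q \<times> carrier Q)"
  unfolding image_image
proof (rule image_eq_by_correspondence[where R = "\<lambda>(a, b) (a1, b1). corresp a a1 \<and> corresp b b1"])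
  show "\<exists>q\<in>carrier Q \<times> carrier Q. (\<lambda>(a, b) (a1, b1). corresp a a1 \<and> corresp b b1) p q"
    if p: "p \<in> carrier P \<times> carrier P" for p
  proof -
    obtain a b where "p = (a, b)" "a \<in> carrier P" "b \<in> carrier P"
      using p by blast
    moreover obtain a1 b1 where "a1 \<in> carrier Q" "corresp a a1" "b1 \<in> carrier Q" "corresp b b1"
      using corresp_left_total calculation(2,3) by metis
    ultimately show ?thesis
      by auto
  qed
  show "\<exists>p\<in>carrier P \<times> carrier P. (\<lambda>(a, b) (a1, b1). corresp a a1 \<and> corresp b b1) p q"
    if q: "q \<in> carrier Q \<times> carrier Q" for q
  proof -
    obtain a1 b1 where "q = (a1, b1)" "a1 \<in> carrier Q" "b1 \<in> carrier Q"
      using q by blast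
    moreover obtain a b where "a \<in> carrier P" "corresp a a1" "b \<in> carrier P" "corresp b b1"
      using corresp_right_total calculation(2,3) by metis
    ultimately show ?thesis
      by auto
  qed
  fix p q
  assume "(\<lambda>(a, b) (a1, b1). corresp a a1 \<and> corresp b b1) p q"
  then obtain a b a1 b1 where pq: "p = (a, b)" "q = (a1, b1)" and ab: "corresp a a1" "corresp b b1"
    by auto
  show "\<delta> ((\<lambda>(a, b). acomm P a (lam P C b x) \<otimes>\<^bsub>P\<^esub> bstar P C b x) p) =
      (\<lambda>(a1, b1). acomm Q a1 (lam Q D b1 x1) \<otimes>\<^bsub>Q\<^esub> bstar Q D b1 x1) q"
    unfolding pq using delta_acomm_lam_mult_bstar[OF ab x] by simp
qed

lemma card_lambda_orbit_eq:
  assumes x: "corresp x x1"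
  shows "card (A.lambda_orbit x) = card (B.lambda_orbit x1)"
proof -
  have in_carrier: "x \<in> carrier P" "x1 \<in> carrier Q"
    using x corresp_carrier by blast+
  let ?S = "(\<lambda>a. bstar P C a x) ` carrier P"
  have "?S \<subseteq> derived P C"
    using in_carrier by (auto intro: bstar_in_derived)
  hence inj: "inj_on \<delta> ?S"
    by (rule inj_on_subset[OF inj_on_delta])
  have "card (A.lambda_orbit x) = card ?S"
    by (rule A.card_lambda_orbit[OF in_carrier(1)])
  also have "\<dots> = card (\<delta> ` ?S)"
    using inj by (rule card_image[symmetric])
  also have "\<dots> = card (B.lambda_orbit x1)"
    unfolding delta_image_bstar[OF x] by (rule B.card_lambda_orbit[OF in_carrier(2), symmetric])
  finally show ?thesis .
qed

lemma card_theta_orbit_eq: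
  assumes x: "corresp x x1"
  shows "card (A.theta_orbit x) = card (B.theta_orbit x1)"
proof -
  have in_carrier: "x \<in> carrier P" "x1 \<in> carrier Q"
    using x corresp_carrier by blast+
  let ?S = "(\<lambda>(a, b). acomm P a (lam P C b x) \<otimes>\<^bsub>P\<^esub> bstar P C b x) ` (carrier P \<times> carrier P)"
  have "?S \<subseteq> derived P C"
    using in_carrier by (auto intro!: derived_mult acomm_in_derived bstar_in_derived)
  hence inj: "inj_on \<delta> ?S"
    by (rule inj_on_subset[OF inj_on_delta])
  have "card (A.theta_orbit x) = card ?S"
    by (rule A.card_theta_orbit[OF in_carrier(1)])
  also have "\<dots> = card (\<delta> ` ?S)"
    using inj by (rule card_image[symmetric])
  also have "\<dots> = card (B.theta_orbit x1)"
    unfolding delta_image_acomm_lam_mult_bstar[OF x]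
    by (rule B.card_theta_orbit[OF in_carrier(2), symmetric])
  finally show ?thesis .
qed

lemma card_Ann_eq:
  assumes "finite (carrier P)" "finite (carrier Q)" "card (carrier P) = card (carrier Q)"
  shows "card (Ann P C) = card (Ann Q D)"
proof -
  have "card (rcosets\<^bsub>P\<^esub> Ann P C) * card (Ann P C) = card (rcosets\<^bsub>Q\<^esub> Ann Q D) * card (Ann Q D)"
    using A.P.lagrange_finite[OF assms(1) A.subgroup_Ann] B.P.lagrange_finite[OF assms(2) B.subgroup_Ann]
      assms(3) unfolding order_def by simp
  moreover have "card (rcosets\<^bsub>P\<^esub> Ann P C) = card (rcosets\<^bsub>Q\<^esub> Ann Q D)"
    using bij_betw_same_card[OF xi_bij] .
  moreover have "card (rcosets\<^bsub>P\<^esub> Ann P C) \<noteq> 0"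
    using A.P.lagrange_finite[OF assms(1) A.subgroup_Ann] A.P.order_gt_0_iff_finite assms(1)
    by (metis mult_is_0 not_less_zero)
  ultimately show ?thesis
    by simp
qed

lemma card_orbit_size_eq:
  fixes O1 :: "'a \<Rightarrow> 'a set" and O2 :: "'b \<Rightarrow> 'b set"
  assumes fin: "finite (carrier P)" "finite (carrier Q)" and card_eq: "card (carrier P) = card (carrier Q)"
    and orbits: "\<And>x y. corresp x y \<Longrightarrow> card (O1 x) = card (O2 y)"
  shows "card {x \<in> carrier P. card (O1 x) = n} = card {y \<in> carrier Q. card (O2 y) = n}"
proof (rule card_fibre_eq_blockwise[where R = "rcosets\<^bsub>P\<^esub> Ann P C" and R' = "rcosets\<^bsub>Q\<^esub> Ann Q D"
      and k = "card (Ann P C)" and \<xi> = \<xi>])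
  show "finite (carrier P)" "finite (carrier Q)"
    by (fact fin)+
  show "\<Union>(rcosets\<^bsub>P\<^esub> Ann P C) = carrier P" "pairwise disjnt (rcosets\<^bsub>P\<^esub> Ann P C)"
    by (rule A.P.rcosets_part_G[OF A.subgroup_Ann], rule A.P.rcos_disjoint[OF A.subgroup_Ann])
  show "\<Union>(rcosets\<^bsub>Q\<^esub> Ann Q D) = carrier Q" "pairwise disjnt (rcosets\<^bsub>Q\<^esub> Ann Q D)"
    by (rule B.P.rcosets_part_G[OF B.subgroup_Ann], rule B.P.rcos_disjoint[OF B.subgroup_Ann])
  show "card U = card (Ann P C)" if "U \<in> rcosets\<^bsub>P\<^esub> Ann P C" for U
    using A.P.card_rcosets_equal[OF that A.Ann_subset] by simp
  show "card V = card (Ann P C)" if "V \<in> rcosets\<^bsub>Q\<^esub> Ann Q D" for V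
    using B.P.card_rcosets_equal[OF that B.Ann_subset] card_Ann_eq[OF fin card_eq] by simp
  show "0 < card (Ann P C)"
    using A.one_in_Ann finite_subset[OF A.Ann_subset fin(1)] card_gt_0_iff by blast
  show "bij_betw \<xi> (rcosets\<^bsub>P\<^esub> Ann P C) (rcosets\<^bsub>Q\<^esub> Ann Q D)"
    by (rule xi_bij)
  show "card (O1 x) = card (O2 y)" if U: "U \<in> rcosets\<^bsub>P\<^esub> Ann P C" "x \<in> U" "y \<in> \<xi> U" for U x y
  proof (rule orbits)
    have "x \<in> carrier P" "U = Ann P C #>\<^bsub>P\<^esub> x"
      using A.P.rcosets_eq_rcoset_of_mem[OF A.subgroup_Ann U(1,2)] by blast+
    moreover have "y \<in> carrier Q" "\<xi> U = Ann Q D #>\<^bsub>Q\<^esub> y"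
      using B.P.rcosets_eq_rcoset_of_mem[OF B.subgroup_Ann bij_betw_apply[OF xi_bij U(1)] U(3)] by blast+
    ultimately show "corresp x y"
      unfolding corresp_def by simp
  qed
qed

lemma Lambda_graph_iso:
  assumes "finite (carrier P)" "finite (carrier Q)" "card (carrier P) = card (carrier Q)"
  shows "Lambda_graph_iso P C Q D"
  unfolding Lambda_graph_iso_def A.lambda_orbits_eq B.lambda_orbits_eq
  by (rule graph_iso_big_orbits[OF assms(1) A.orbit_map_lambda_orbit assms(2) B.orbit_map_lambda_orbit
        card_orbit_size_eq[OF assms card_lambda_orbit_eq]])

lemma Theta_graph_iso:
  assumes "finite (carrier P)" "finite (carrier Q)" "card (carrier P) = card (carrier Q)"
  shows "Theta_graph_iso P C Q D"
  unfolding Theta_graph_iso_def A.theta_orbits_eq B.theta_orbits_eq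
  by (rule graph_iso_big_orbits[OF assms(1) A.orbit_map_theta_orbit assms(2) B.orbit_map_theta_orbit
        card_orbit_size_eq[OF assms card_theta_orbit_eq]])

end

theorem mainTheorem8:
  fixes P C :: "'a monoid" and Q D :: "'b monoid"
  assumes "skew_brace P C" and "skew_brace Q D"
    and "finite (carrier P)" and "finite (carrier Q)"
    and "card (carrier P) = card (carrier Q)"
    and "isoclinic P C Q D"
  shows "Lambda_graph_iso P C Q D \<and> Theta_graph_iso P C Q D"
proof -
  obtain \<xi> \<delta> where "skew_brace_isoclinism P C Q D \<xi> \<delta>"
    using assms(1,2,6) unfolding isoclinic_def skew_brace_isoclinism_def skew_brace_isoclinism_axioms_def
      skewbrace_def by blast
  then interpret skew_brace_isoclinism P C Q D \<xi> \<delta> .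
  show ?thesis
    using Lambda_graph_iso Theta_graph_iso assms(3-5) by blast
qed

end
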